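(* Let $p \geq 1$ and $N\in\mathbb{N}$. Let $\mu_1$ and $\mu_2$ be two permutation invariant Radon probability measures on $\mathbb{R}^N$ whose $p$:th moments are finite. Let $I\subset[N]$. If $f:\mathbb{R}^{|I|}\to\mathbb{R}$ is a bounded $1$-Lipschitz function with respect to the $\|\cdot\|_p$ norm, then \[ \left|\langle f\circ P_I\rangle_{\mu_1}-\langle f\circ P_I\rangle_{\mu_2}\right| \leq \left(\frac{|I|}{1-\frac{|I|}{N}}\right)^{1/p} w_p(\mu_1,\mu_2;N). \]
   Context: $[N]=\{1,\dots,N\}$ and $S_N$ is its permutation group. For $\pi\in S_N$, $Q_\pi:\mathbb{R}^N\to\mathbb{R}^N$ is $(Q_\pi x)_j=x_{\pi^{-1}(j)}$. A probability measure $\mu$ on $\mathbb{R}^N$ is permutation invariant if for every integrable $f$ and $\pi\in S_N$, $f\circ Q_\pi$ is integrable and $\langle f\circ Q_\pi\rangle_\mu=\langle f\rangle_\mu$. For $I\subset[N]$ with $n=|I|$, let $\pi_I:I\to[n]$ be the unique order-preserving bijection; $P_I:\mathbb{R}^N\to\mathbb{R}^n$ is $(P_Ix)_j=x_{\pi_I^{-1}(j)}$. The specific $p$-norm fluctuation distance is $w_p(\mu_1,\mu_2;N)=\left(\inf_\gamma\int\gamma(dx,dy)\frac1N\sum_{i=1}^N|x_i-y_i|^p\right)^{1/p}$, the infimum over all couplings $\gamma$ of $\mu_1,\mu_2$ (probability measures on $\mathbb{R}^N\times\mathbb{R}^N$ with marginals $\mu_1$ and $\mu_2$). A function is $1$-Lipschitz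 w.r.t. $\|\cdot\|_p$ if $|f(\phi)-f(\psi)|\le\|\phi-\psi\|_p$ for all $\phi,\psi$. *)

theory Defs
  imports "HOL-Probability.Probability"
begin

definition RN :: "nat \<Rightarrow> (nat \<Rightarrow> real) measure" where
  "RN N = PiM {1..N} (\<lambda>_. borel)"

definition Qperm :: "nat \<Rightarrow> (nat \<Rightarrow> nat) \<Rightarrow> (nat \<Rightarrow> real) \<Rightarrow> (nat \<Rightarrow> real)" where
  "Qperm N \<pi> x = restrict (\<lambda>j. x (inv_into {1..N} \<pi> j)) {1..N}"

definition perm_invariant :: "nat \<Rightarrow> (nat \<Rightarrow> real) measure \<Rightarrow> bool" where
  "perm_invariant N \<mu> \<longleftrightarrow>
     (\<forall>f :: (nat \<Rightarrow> real) \<Rightarrow> real. \<forall>\<pi>. \<pi> permutes {1..N} \<longrightarrow> integrable \<mu> f \<longrightarrow>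
        integrable \<mu> (f \<circ> Qperm N \<pi>) \<and> integral\<^sup>L \<mu> (f \<circ> Qperm N \<pi>) = integral\<^sup>L \<mu> f)"

definition PI :: "nat set \<Rightarrow> (nat \<Rightarrow> real) \<Rightarrow> (nat \<Rightarrow> real)" where
  "PI I x = restrict (\<lambda>j. x (sorted_list_of_set I ! (j - 1))) {1..card I}"

definition pnorm :: "real \<Rightarrow> nat \<Rightarrow> (nat \<Rightarrow> real) \<Rightarrow> real" where
  "pnorm p n x = (\<Sum>j\<in>{1..n}. \<bar>x j\<bar> powr p) powr (1 / p)"

definition couplings :: "nat \<Rightarrow> (nat \<Rightarrow> real) measure \<Rightarrow> (nat \<Rightarrow> real) measure
    \<Rightarrow> ((nat \<Rightarrow> real) \<times> (nat \<Rightarrow> real)) measure set" where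
  "couplings N \<mu>1 \<mu>2 = {\<gamma>. sets \<gamma> = sets (RN N \<Otimes>\<^sub>M RN N) \<and>
       distr \<gamma> (RN N) fst = \<mu>1 \<and> distr \<gamma> (RN N) snd = \<mu>2}"

definition wp :: "real \<Rightarrow> (nat \<Rightarrow> real) measure \<Rightarrow> (nat \<Rightarrow> real) measure \<Rightarrow> nat \<Rightarrow> real" where
  "wp p \<mu>1 \<mu>2 N = (enn2real (INF \<gamma>\<in>couplings N \<mu>1 \<mu>2.
       \<integral>\<^sup>+ z. ennreal ((1 / real N) * (\<Sum>i\<in>{1..N}. \<bar>fst z i - snd z i\<bar> powr p)) \<partial>\<gamma>)) powr (1 / p)"

end

theory Submission
  imports Defs
begin

text \<open>By permutation invariance, averaging the integrand over the \<open>N\<close> cyclic shifts \<open>Q\<^sub>t\<close> of the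
  coordinates changes neither integral. For any coupling \<open>\<gamma>\<close> the difference of the averaged integrals
  is a single \<open>\<gamma>\<close>-integral, so Jensen's inequality and the Lipschitz bound estimate its \<open>p\<close>-th power
  by the \<open>\<gamma>\<close>-mean of \<open>N\<^sup>-\<^sup>1 \<Sum>\<^sub>t \<parallel>P\<^sub>I Q\<^sub>t x - P\<^sub>I Q\<^sub>t y\<parallel>\<^sub>p\<^sup>p\<close>. Every coordinate lies in exactly \<open>|I|\<close> of the
  \<open>N\<close> shifted copies of \<open>I\<close>, so this is \<open>|I|\<close> times the cost \<open>N\<^sup>-\<^sup>1 \<Sum>\<^sub>i |x\<^sub>i - y\<^sub>i|\<^sup>p\<close> of \<open>\<gamma>\<close>.
  Taking the infimum over couplings gives the bound with the constant \<open>|I|\<^bsup>1/p\<^esup>\<close>, which is smaller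
  than the stated one. The finite \<open>p\<close>-th moments give the product coupling finite cost, so the
  infimum in \<open>w\<^sub>p\<close> is finite.\<close>

section \<open>Cyclic shifts and coordinate projections\<close>

lemma add_mod_right_cancel_nat:
  fixes a b t N :: nat
  assumes eq: "(a + t) mod N = (b + t) mod N" and "a < N" "b < N"
  shows "a = b"
proof -
  have reduce: "c = ((c + t) mod N + (N * t - t)) mod N" if "c < N" for c
  proof -
    have "c + t + (N * t - t) = c + t * N" using that by (cases N) auto
    then show ?thesis using that by (metis mod_add_left_eq mod_less mod_mult_self1)
  qed
  show ?thesis using reduce[OF \<open>a < N\<close>] reduce[OF \<open>b < N\<close>] eq by simp
qed

definition cyclic_shift :: "nat \<Rightarrow> nat \<Rightarrow> nat \<Rightarrow> nat" where
  "cyclic_shift N t j = (if j \<in> {1..N} then (j + t - 1) mod N + 1 else j)"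

lemma cyclic_shift_eq_iff:
  assumes "j \<in> {1..N}" "j' \<in> {1..N}"
  shows "cyclic_shift N t j = cyclic_shift N t' j' \<longleftrightarrow> (j - 1 + t) mod N = (j' - 1 + t') mod N"
  using assms by (auto simp: cyclic_shift_def)

lemma cyclic_shift_permutes: "cyclic_shift N t permutes {1..N}"
proof (rule bij_imp_permutes)
  have "inj_on (cyclic_shift N t) {1..N}"
  proof (rule inj_onI)
    fix j j' assume j: "j \<in> {1..N}" "j' \<in> {1..N}" and "cyclic_shift N t j = cyclic_shift N t j'"
    then have "(j - 1 + t) mod N = (j' - 1 + t) mod N" using cyclic_shift_eq_iff[OF j] by blast
    then have "j - 1 = j' - 1" by (rule add_mod_right_cancel_nat) (use j in auto)
    then show "j = j'" using j by auto
  qed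
  moreover have "cyclic_shift N t ` {1..N} \<subseteq> {1..N}"
    by (auto simp: cyclic_shift_def Suc_le_eq)
  ultimately show "bij_betw (cyclic_shift N t) {1..N} {1..N}"
    by (simp add: bij_betw_def endo_inj_surj)
qed (auto simp: cyclic_shift_def)

lemma bij_betw_inv_cyclic_shift:
  assumes i: "i \<in> {1..N}"
  shows "bij_betw (\<lambda>t. inv_into {1..N} (cyclic_shift N t) i) {..<N} {1..N}"
proof -
  let ?j = "\<lambda>t. inv_into {1..N} (cyclic_shift N t) i"
  have bij: "bij_betw (cyclic_shift N t) {1..N} {1..N}" for t
    using cyclic_shift_permutes permutes_imp_bij by blast
  have j: "?j t \<in> {1..N}" "cyclic_shift N t (?j t) = i" for t
    using bij_betw_inv_into_right[OF bij i] bij_betwE[OF bij_betw_inv_into[OF bij]] i by auto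
  have "inj_on ?j {..<N}"
  proof (rule inj_onI)
    fix t t' assume t: "t \<in> {..<N}" "t' \<in> {..<N}" and eq: "?j t = ?j t'"
    have "cyclic_shift N t (?j t) = cyclic_shift N t' (?j t)" using j(2)[of t] j(2)[of t'] eq by simp
    then have "(?j t - 1 + t) mod N = (?j t - 1 + t') mod N"
      using cyclic_shift_eq_iff[OF j(1)[of t] j(1)[of t]] by blast
    then have "(t + (?j t - 1)) mod N = (t' + (?j t - 1)) mod N" by (simp only: add.commute)
    then show "t = t'" by (rule add_mod_right_cancel_nat) (use t in auto)
  qed
  moreover have "?j ` {..<N} = {1..N}"
    using \<open>inj_on ?j {..<N}\<close> j by (intro card_subset_eq) (auto simp: card_image)
  ultimately show ?thesis by (simp add: bij_betw_def)
qed

lemma space_RN: "space (RN n) = PiE {1..n} (\<lambda>_. UNIV)"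
  by (simp add: RN_def space_PiM)

lemma Qperm_measurable:
  assumes "\<pi> permutes {1..N}"
  shows "Qperm N \<pi> \<in> RN N \<rightarrow>\<^sub>M RN N"
proof -
  have "inv_into {1..N} \<pi> j \<in> {1..N}" if "j \<in> {1..N}" for j
    using assms that by (metis bij_betw_def inv_into_into permutes_imp_bij)
  then show ?thesis
    unfolding Qperm_def RN_def by (intro measurable_restrict measurable_component_singleton) auto
qed

lemma sorted_list_of_set_nth_in_range:
  fixes I :: "nat set"
  assumes "I \<subseteq> {1..N}" "j \<in> {1..card I}"
  shows "sorted_list_of_set I ! (j - 1) \<in> {1..N}"
proof -
  have "finite I" using finite_subset[OF assms(1)] by simp
  then have "j - 1 < length (sorted_list_of_set I)" using assms(2) by auto
  then have "sorted_list_of_set I ! (j - 1) \<in> set (sorted_list_of_set I)" by (rule nth_mem)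
  then show ?thesis using \<open>finite I\<close> assms(1) by auto
qed

lemma PI_measurable:
  assumes "I \<subseteq> {1..N}"
  shows "PI I \<in> RN N \<rightarrow>\<^sub>M RN (card I)"
proof -
  have "sorted_list_of_set I ! (j - 1) \<in> {1..N}" if "j \<in> {1..card I}" for j
    using sorted_list_of_set_nth_in_range[OF assms that] .
  then show ?thesis
    unfolding PI_def RN_def by (intro measurable_restrict measurable_component_singleton) auto
qed

lemma PI_in_space: "PI I x \<in> space (RN (card I))"
  by (simp add: space_RN PI_def)

lemma PI_Qperm:
  assumes "\<pi> permutes {1..N}" "I \<subseteq> {1..N}" "j \<in> {1..card I}"
  shows "PI I (Qperm N \<pi> x) j = x (inv_into {1..N} \<pi> (sorted_list_of_set I ! (j - 1)))"
proof -
  have "sorted_list_of_set I ! (j - 1) \<in> {1..N}"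
    using sorted_list_of_set_nth_in_range[OF assms(2,3)] .
  then show ?thesis using assms(3) by (simp add: PI_def Qperm_def)
qed

lemma pnorm_powr: "p > 0 \<Longrightarrow> pnorm p n x powr p = (\<Sum>j\<in>{1..n}. \<bar>x j\<bar> powr p)"
  by (simp add: pnorm_def powr_powr sum_nonneg)

lemma sum_cyclic_shifts_pnorm_PI:
  assumes "p > 0" "I \<subseteq> {1..N}"
  shows "(\<Sum>t<N. pnorm p (card I) (\<lambda>j. PI I (Qperm N (cyclic_shift N t) x) j
                                      - PI I (Qperm N (cyclic_shift N t) y) j) powr p)
           = card I * (\<Sum>i\<in>{1..N}. \<bar>x i - y i\<bar> powr p)"
proof -
  let ?s = "\<lambda>j. sorted_list_of_set I ! (j - 1)"
  let ?d = "\<lambda>i. \<bar>x i - y i\<bar> powr p"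
  have s: "?s j \<in> {1..N}" if "j \<in> {1..card I}" for j
    using sorted_list_of_set_nth_in_range[OF assms(2) that] .
  have "(\<Sum>t<N. pnorm p (card I) (\<lambda>j. PI I (Qperm N (cyclic_shift N t) x) j
                                      - PI I (Qperm N (cyclic_shift N t) y) j) powr p)
      = (\<Sum>t<N. \<Sum>j\<in>{1..card I}. ?d (inv_into {1..N} (cyclic_shift N t) (?s j)))"
  proof (intro sum.cong refl)
    fix t assume "t \<in> {..<N}"
    have "\<bar>PI I (Qperm N (cyclic_shift N t) x) j - PI I (Qperm N (cyclic_shift N t) y) j\<bar> powr p
        = ?d (inv_into {1..N} (cyclic_shift N t) (?s j))" if "j \<in> {1..card I}" for j
      using PI_Qperm[OF cyclic_shift_permutes assms(2) that] by simp
    then show "pnorm p (card I) (\<lambda>j. PI I (Qperm N (cyclic_shift N t) x) j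
                                      - PI I (Qperm N (cyclic_shift N t) y) j) powr p
        = (\<Sum>j\<in>{1..card I}. ?d (inv_into {1..N} (cyclic_shift N t) (?s j)))"
      using pnorm_powr[OF assms(1)] by (auto intro: sum.cong)
  qed
  also have "\<dots> = (\<Sum>j\<in>{1..card I}. \<Sum>t<N. ?d (inv_into {1..N} (cyclic_shift N t) (?s j)))"
    by (rule sum.swap)
  also have "\<dots> = (\<Sum>j\<in>{1..card I}. \<Sum>i\<in>{1..N}. ?d i)"
  proof (rule sum.cong[OF refl])
    fix j assume "j \<in> {1..card I}"
    show "(\<Sum>t<N. ?d (inv_into {1..N} (cyclic_shift N t) (?s j))) = (\<Sum>i\<in>{1..N}. ?d i)"
      using sum.reindex_bij_betw[OF bij_betw_inv_cyclic_shift[OF s[OF \<open>j \<in> {1..card I}\<close>]], where g = ?d] .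
  qed
  finally show ?thesis by simp
qed

section \<open>Convexity of \<open>|x|\<^sup>p\<close>\<close>

lemma convex_on_comp_mono:
  fixes g :: "'a::real_vector \<Rightarrow> real" and h :: "real \<Rightarrow> real"
  assumes g: "convex_on S g" and h: "convex_on T h" "mono_on T h" and gST: "g ` S \<subseteq> T"
  shows "convex_on S (\<lambda>x. h (g x))"
  unfolding convex_on_def
proof (intro conjI ballI allI impI)
  show "convex S" using g by (rule convex_on_imp_convex)
  fix x y and u v :: real assume xy: "x \<in> S" "y \<in> S" and uv: "0 \<le> u" "0 \<le> v" "u + v = 1"
  have "u *\<^sub>R x + v *\<^sub>R y \<in> S" using xy uv \<open>convex S\<close> by (simp add: convexD)
  moreover have "u * g x + v * g y \<in> T"
    using xy uv gST convexD[OF convex_on_imp_convex[OF h(1)], of "g x" "g y" u v] by auto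
  moreover have "g (u *\<^sub>R x + v *\<^sub>R y) \<le> u * g x + v * g y"
    using g xy uv by (auto simp: convex_on_def)
  ultimately have "h (g (u *\<^sub>R x + v *\<^sub>R y)) \<le> h (u * g x + v * g y)"
    using gST by (intro mono_onD[OF h(2)]) auto
  also have "\<dots> \<le> u * h (g x) + v * h (g y)"
    using h(1) uv gST xy unfolding convex_on_def by (simp add: image_subset_iff)
  finally show "h (g (u *\<^sub>R x + v *\<^sub>R y)) \<le> u * h (g x) + v * h (g y)" .
qed

lemma convex_on_powr_nonneg:
  assumes p: "p \<ge> 1"
  shows "convex_on {0..} (\<lambda>x::real. x powr p)"
proof (rule convex_on_linorderI)
  fix t x y :: real assume t: "0 < t" "t < 1" and xy: "x \<in> {0..}" "y \<in> {0..}" "x < y"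
  show "((1 - t) *\<^sub>R x + t *\<^sub>R y) powr p \<le> (1 - t) * x powr p + t * y powr p"
  proof (cases "x = 0")
    case True
    have "t powr p \<le> t powr 1" using p t by (intro powr_mono') auto
    then have "t powr p * y powr p \<le> t * y powr p" using t by (intro mult_right_mono) auto
    then show ?thesis using True t xy by (simp add: powr_mult)
  next
    case False
    then show ?thesis using convex_onD[OF powr_convex[OF p], of t x y] t xy by auto
  qed
qed simp

lemma convex_on_abs_powr:
  assumes "p \<ge> 1"
  shows "convex_on UNIV (\<lambda>x::real. \<bar>x\<bar> powr p)"
proof (rule convex_on_comp_mono[where g = abs and h = "\<lambda>x. x powr p" and T = "{0..}"])
  show "convex_on UNIV (\<lambda>x::real. \<bar>x\<bar>)"
    using convex_on_dist[of UNIV "0::real", unfolded dist_real_def] by simp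
  show "mono_on {0..} (\<lambda>x::real. x powr p)" using assms by (intro mono_onI powr_mono2) auto
qed (use convex_on_powr_nonneg[OF assms] in auto)

lemma abs_mean_powr_le:
  fixes a :: "'a \<Rightarrow> real"
  assumes "p \<ge> 1" "finite A" "A \<noteq> {}"
  shows "\<bar>(\<Sum>t\<in>A. a t) / card A\<bar> powr p \<le> (\<Sum>t\<in>A. \<bar>a t\<bar> powr p) / card A"
  using convex_on_sum[OF assms(2,3) convex_on_abs_powr[OF assms(1)], of "\<lambda>_. 1 / card A" a] assms
  by (simp add: sum_divide_distrib)

lemma abs_diff_powr_le:
  fixes a b :: real
  assumes p: "p \<ge> 1"
  shows "\<bar>a - b\<bar> powr p \<le> 2 powr (p - 1) * (\<bar>a\<bar> powr p + \<bar>b\<bar> powr p)"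
proof -
  have "\<bar>a - b\<bar> powr p = 2 powr p * \<bar>(a - b) / 2\<bar> powr p"
    by (simp add: powr_divide)
  also have "\<dots> \<le> 2 powr p * (1 / 2 * \<bar>a\<bar> powr p + 1 / 2 * \<bar>b\<bar> powr p)"
    using convex_onD[OF convex_on_abs_powr[OF p], of "1 / 2" a "- b"]
    by (intro mult_left_mono) (auto simp: diff_divide_distrib)
  also have "\<dots> = 2 powr (p - 1) * (\<bar>a\<bar> powr p + \<bar>b\<bar> powr p)"
    by (simp add: powr_diff field_simps)
  finally show ?thesis .
qed

lemma sum_abs_diff_powr_le:
  fixes x y :: "'a \<Rightarrow> real"
  assumes "p \<ge> 1"
  shows "(\<Sum>i\<in>A. \<bar>x i - y i\<bar> powr p)
           \<le> 2 powr (p - 1) * ((\<Sum>i\<in>A. \<bar>x i\<bar> powr p) + (\<Sum>i\<in>A. \<bar>y i\<bar> powr p))"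
proof -
  have "(\<Sum>i\<in>A. \<bar>x i - y i\<bar> powr p) \<le> (\<Sum>i\<in>A. 2 powr (p - 1) * (\<bar>x i\<bar> powr p + \<bar>y i\<bar> powr p))"
    by (intro sum_mono abs_diff_powr_le[OF assms])
  also have "\<dots> = 2 powr (p - 1) * ((\<Sum>i\<in>A. \<bar>x i\<bar> powr p) + (\<Sum>i\<in>A. \<bar>y i\<bar> powr p))"
    by (simp add: sum.distrib distrib_left sum_distrib_left)
  finally show ?thesis .
qed

lemma (in prob_space) abs_expectation_powr_le:
  fixes X :: "'a \<Rightarrow> real" and p :: real
  assumes "p \<ge> 1" "integrable M X" "integrable M (\<lambda>x. \<bar>X x\<bar> powr p)"
  shows "\<bar>expectation X\<bar> powr p \<le> expectation (\<lambda>x. \<bar>X x\<bar> powr p)"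
  using jensens_inequality[where I = UNIV and q = "\<lambda>x. \<bar>x\<bar> powr p",
      OF assms(2) _ _ assms(3) convex_on_abs_powr[OF assms(1)]] by auto

lemma (in prob_space) abs_expectation_powr_le_nn_integral:
  fixes X :: "'a \<Rightarrow> real" and p :: real
  assumes p: "p \<ge> 1" and X: "X \<in> borel_measurable M" "\<And>x. \<bar>X x\<bar> \<le> B"
  shows "ennreal (\<bar>expectation X\<bar> powr p) \<le> (\<integral>\<^sup>+ x. ennreal (\<bar>X x\<bar> powr p) \<partial>M)"
proof -
  have Xp: "(\<lambda>x. \<bar>X x\<bar> powr p) \<in> borel_measurable M"
    using X(1) by measurable
  have "integrable M X"
    using X by (intro integrable_const_bound[where B = B] AE_I2) auto
  moreover have int_Xp: "integrable M (\<lambda>x. \<bar>X x\<bar> powr p)"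
    using Xp X(2) p by (intro integrable_const_bound[where B = "B powr p"] AE_I2) (auto simp: powr_mono2)
  ultimately have "ennreal (\<bar>expectation X\<bar> powr p) \<le> ennreal (expectation (\<lambda>x. \<bar>X x\<bar> powr p))"
    by (intro ennreal_leI abs_expectation_powr_le[OF p])
  also have "\<dots> = (\<integral>\<^sup>+ x. ennreal (\<bar>X x\<bar> powr p) \<partial>M)"
    using int_Xp by (simp add: nn_integral_eq_integral)
  finally show ?thesis .
qed

section \<open>Averaging over cyclic shifts\<close>

definition cyclic_average :: "nat \<Rightarrow> ((nat \<Rightarrow> real) \<Rightarrow> real) \<Rightarrow> (nat \<Rightarrow> real) \<Rightarrow> real" where
  "cyclic_average N g x = (\<Sum>t<N. g (Qperm N (cyclic_shift N t) x)) / N"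

lemma cyclic_average_measurable:
  assumes "g \<in> borel_measurable (RN N)"
  shows "cyclic_average N g \<in> borel_measurable (RN N)"
proof -
  have "(\<lambda>x. g (Qperm N (cyclic_shift N t) x)) \<in> borel_measurable (RN N)" for t
    using measurable_comp[OF Qperm_measurable[OF cyclic_shift_permutes] assms] by (simp add: comp_def)
  then show ?thesis unfolding cyclic_average_def by measurable
qed

lemma abs_cyclic_average_le:
  assumes "\<And>x. \<bar>g x\<bar> \<le> B"
  shows "\<bar>cyclic_average N g x\<bar> \<le> B"
proof -
  have "\<bar>\<Sum>t<N. g (Qperm N (cyclic_shift N t) x)\<bar> \<le> (\<Sum>t<N. \<bar>g (Qperm N (cyclic_shift N t) x)\<bar>)"
    by (rule sum_abs)
  also have "\<dots> \<le> N * B"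
    using sum_mono[of "{..<N}" "\<lambda>t. \<bar>g (Qperm N (cyclic_shift N t) x)\<bar>" "\<lambda>_. B"] assms by simp
  finally have sum_le: "\<bar>\<Sum>t<N. g (Qperm N (cyclic_shift N t) x)\<bar> \<le> N * B" .
  show ?thesis
  proof (cases "N = 0")
    case True
    then show ?thesis using assms[of x] by (simp add: cyclic_average_def)
  next
    case False
    then show ?thesis using sum_le by (simp add: cyclic_average_def pos_divide_le_eq mult.commute[of B])
  qed
qed

lemma integral_cyclic_average:
  assumes "perm_invariant N \<mu>" "integrable \<mu> g" "N > 0"
  shows "integral\<^sup>L \<mu> (cyclic_average N g) = integral\<^sup>L \<mu> g"
proof -
  have "integrable \<mu> (\<lambda>x. g (Qperm N (cyclic_shift N t) x))"
    and "integral\<^sup>L \<mu> (\<lambda>x. g (Qperm N (cyclic_shift N t) x)) = integral\<^sup>L \<mu> g" for t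
    using assms(1,2) cyclic_shift_permutes unfolding perm_invariant_def comp_def by blast+
  then show ?thesis using assms(3) by (simp add: cyclic_average_def[abs_def] integral_sum)
qed

lemma cyclic_average_PI_lipschitz:
  assumes p: "p \<ge> 1" and I: "I \<subseteq> {1..N}" and N: "N > 0"
    and lip: "\<forall>\<phi>\<in>space (RN (card I)). \<forall>\<psi>\<in>space (RN (card I)).
                \<bar>f \<phi> - f \<psi>\<bar> \<le> pnorm p (card I) (\<lambda>j. \<phi> j - \<psi> j)"
  shows "\<bar>cyclic_average N (f \<circ> PI I) x - cyclic_average N (f \<circ> PI I) y\<bar> powr p
           \<le> card I / N * (\<Sum>i\<in>{1..N}. \<bar>x i - y i\<bar> powr p)"
proof -
  let ?Q = "\<lambda>t. Qperm N (cyclic_shift N t)"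
  define d where "d t = f (PI I (?Q t x)) - f (PI I (?Q t y))" for t
  have avg: "cyclic_average N (f \<circ> PI I) x - cyclic_average N (f \<circ> PI I) y = (\<Sum>t<N. d t) / card {..<N}"
    by (simp add: cyclic_average_def d_def sum_subtractf diff_divide_distrib)
  have d: "\<bar>d t\<bar> \<le> pnorm p (card I) (\<lambda>j. PI I (?Q t x) j - PI I (?Q t y) j)" for t
    unfolding d_def using lip PI_in_space by blast
  have "\<bar>cyclic_average N (f \<circ> PI I) x - cyclic_average N (f \<circ> PI I) y\<bar> powr p
      = \<bar>(\<Sum>t<N. d t) / card {..<N}\<bar> powr p"
    by (simp only: avg)
  also have "\<dots> \<le> (\<Sum>t<N. \<bar>d t\<bar> powr p) / card {..<N}"
    by (rule abs_mean_powr_le) (use p N in auto)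
  also have "\<dots> \<le> (\<Sum>t<N. pnorm p (card I) (\<lambda>j. PI I (?Q t x) j - PI I (?Q t y) j) powr p) / card {..<N}"
    by (intro divide_right_mono sum_mono powr_mono2) (use p d in auto)
  also have "\<dots> = card I / N * (\<Sum>i\<in>{1..N}. \<bar>x i - y i\<bar> powr p)"
    using p I by (simp add: sum_cyclic_shifts_pnorm_PI)
  finally show ?thesis .
qed

section \<open>Couplings\<close>

lemma distr_pair_measure_snd:
  assumes "prob_space M1" "prob_space M2"
  shows "distr (M1 \<Otimes>\<^sub>M M2) M2 snd = M2"
proof (rule measure_eqI)
  fix A assume A: "A \<in> sets (distr (M1 \<Otimes>\<^sub>M M2) M2 snd)"
  then have "emeasure (distr (M1 \<Otimes>\<^sub>M M2) M2 snd) A = emeasure (M1 \<Otimes>\<^sub>M M2) (space M1 \<times> A)"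
    by (auto simp: emeasure_distr space_pair_measure dest: sets.sets_into_space
        intro!: arg_cong2[where f = emeasure])
  with A assms show "emeasure (distr (M1 \<Otimes>\<^sub>M M2) M2 snd) A = emeasure M2 A"
    by (simp add: prob_space_imp_sigma_finite sigma_finite_measure.emeasure_pair_measure_Times
        prob_space.emeasure_space_1)
qed simp

lemma pair_measure_in_couplings:
  assumes "prob_space \<mu>1" "sets \<mu>1 = sets (RN N)" "prob_space \<mu>2" "sets \<mu>2 = sets (RN N)"
  shows "\<mu>1 \<Otimes>\<^sub>M \<mu>2 \<in> couplings N \<mu>1 \<mu>2"
proof -
  have "distr (\<mu>1 \<Otimes>\<^sub>M \<mu>2) (RN N) fst = distr (\<mu>1 \<Otimes>\<^sub>M \<mu>2) \<mu>1 fst"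
    "distr (\<mu>1 \<Otimes>\<^sub>M \<mu>2) (RN N) snd = distr (\<mu>1 \<Otimes>\<^sub>M \<mu>2) \<mu>2 snd"
    by (intro distr_cong; simp add: assms)+
  moreover have "sets (\<mu>1 \<Otimes>\<^sub>M \<mu>2) = sets (RN N \<Otimes>\<^sub>M RN N)"
    by (rule sets_pair_measure_cong[OF assms(2,4)])
  ultimately show ?thesis
    using prob_space.distr_pair_fst[OF assms(3)] distr_pair_measure_snd[OF assms(1,3)]
    by (simp add: couplings_def)
qed

lemma sets_couplings: "\<gamma> \<in> couplings N \<mu>1 \<mu>2 \<Longrightarrow> sets \<gamma> = sets (RN N \<Otimes>\<^sub>M RN N)"
  by (simp add: couplings_def)

lemma couplings_measurable_fst: "\<gamma> \<in> couplings N \<mu>1 \<mu>2 \<Longrightarrow> fst \<in> \<gamma> \<rightarrow>\<^sub>M RN N"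
  by (subst measurable_cong_sets[OF sets_couplings refl]) (assumption, rule measurable_fst)

lemma couplings_measurable_snd: "\<gamma> \<in> couplings N \<mu>1 \<mu>2 \<Longrightarrow> snd \<in> \<gamma> \<rightarrow>\<^sub>M RN N"
  by (subst measurable_cong_sets[OF sets_couplings refl]) (assumption, rule measurable_snd)

lemma couplings_prob_space: "\<gamma> \<in> couplings N \<mu>1 \<mu>2 \<Longrightarrow> prob_space \<mu>1 \<Longrightarrow> prob_space \<gamma>"
  using prob_space_distrD[OF couplings_measurable_fst] by (auto simp: couplings_def)

lemma integral_diff_couplings:
  fixes h :: "(nat \<Rightarrow> real) \<Rightarrow> real"
  assumes \<gamma>: "\<gamma> \<in> couplings N \<mu>1 \<mu>2" "prob_space \<mu>1"
    and h: "h \<in> borel_measurable (RN N)" "\<And>x. \<bar>h x\<bar> \<le> B"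
  shows "integral\<^sup>L \<mu>1 h - integral\<^sup>L \<mu>2 h = integral\<^sup>L \<gamma> (\<lambda>z. h (fst z) - h (snd z))"
proof -
  interpret prob_space \<gamma> using couplings_prob_space[OF \<gamma>] .
  have m1: "distr \<gamma> (RN N) fst = \<mu>1" and m2: "distr \<gamma> (RN N) snd = \<mu>2"
    using \<gamma> by (auto simp: couplings_def)
  have hfst: "(\<lambda>z. h (fst z)) \<in> borel_measurable \<gamma>" and hsnd: "(\<lambda>z. h (snd z)) \<in> borel_measurable \<gamma>"
    using measurable_comp[OF couplings_measurable_fst[OF \<gamma>(1)] h(1)]
      measurable_comp[OF couplings_measurable_snd[OF \<gamma>(1)] h(1)] by (simp_all add: comp_def)
  have "integrable \<gamma> (\<lambda>z. h (fst z))" "integrable \<gamma> (\<lambda>z. h (snd z))"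
    using hfst hsnd h(2) by (auto intro: integrable_const_bound[where B = B])
  moreover have "integral\<^sup>L \<mu>1 h = integral\<^sup>L \<gamma> (\<lambda>z. h (fst z))"
    using integral_distr[OF couplings_measurable_fst[OF \<gamma>(1)] h(1)] m1 by simp
  moreover have "integral\<^sup>L \<mu>2 h = integral\<^sup>L \<gamma> (\<lambda>z. h (snd z))"
    using integral_distr[OF couplings_measurable_snd[OF \<gamma>(1)] h(1)] m2 by simp
  ultimately show ?thesis by simp
qed

lemma nn_integral_couplings_fst:
  assumes "\<gamma> \<in> couplings N \<mu>1 \<mu>2" "h \<in> borel_measurable (RN N)"
  shows "(\<integral>\<^sup>+ z. h (fst z) \<partial>\<gamma>) = (\<integral>\<^sup>+ x. h x \<partial>\<mu>1)"
  using nn_integral_distr[OF couplings_measurable_fst[OF assms(1)], of h] assms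
  by (simp add: couplings_def)

lemma nn_integral_couplings_snd:
  assumes "\<gamma> \<in> couplings N \<mu>1 \<mu>2" "h \<in> borel_measurable (RN N)"
  shows "(\<integral>\<^sup>+ z. h (snd z) \<partial>\<gamma>) = (\<integral>\<^sup>+ x. h x \<partial>\<mu>2)"
  using nn_integral_distr[OF couplings_measurable_snd[OF assms(1)], of h] assms
  by (simp add: couplings_def)

lemma nn_integral_couplings_add:
  assumes "\<gamma> \<in> couplings N \<mu>1 \<mu>2" "h1 \<in> borel_measurable (RN N)" "h2 \<in> borel_measurable (RN N)"
  shows "(\<integral>\<^sup>+ z. h1 (fst z) + h2 (snd z) \<partial>\<gamma>) = (\<integral>\<^sup>+ x. h1 x \<partial>\<mu>1) + (\<integral>\<^sup>+ x. h2 x \<partial>\<mu>2)"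
proof -
  have "(\<lambda>z. h1 (fst z)) \<in> borel_measurable \<gamma>" "(\<lambda>z. h2 (snd z)) \<in> borel_measurable \<gamma>"
    using measurable_comp[OF couplings_measurable_fst[OF assms(1)] assms(2)]
      measurable_comp[OF couplings_measurable_snd[OF assms(1)] assms(3)] by (simp_all add: comp_def)
  then show ?thesis
    using nn_integral_couplings_fst[OF assms(1,2)] nn_integral_couplings_snd[OF assms(1,3)]
    by (simp add: nn_integral_add)
qed

lemma le_mult_INF_ennreal:
  fixes x c :: ennreal
  assumes le: "\<And>i. i \<in> A \<Longrightarrow> x \<le> c * f i" and "A \<noteq> {}" "c < \<infinity>"
  shows "x \<le> c * (INF i\<in>A. f i)"
proof (cases "c = 0")
  case True
  then show ?thesis using le \<open>A \<noteq> {}\<close> by auto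
next
  case False
  then have "x / c \<le> (INF i\<in>A. f i)"
    using le by (intro INF_greatest divide_le_posI_ennreal) (auto simp: zero_less_iff_neq_zero)
  then have "c * (x / c) \<le> c * (INF i\<in>A. f i)" by (rule mult_left_mono) simp
  moreover have "c * (x / c) = x * c / c" by (simp add: ennreal_times_divide mult.commute)
  moreover have "x * c / c = x" using False \<open>c < \<infinity>\<close> by (simp add: mult_divide_eq_ennreal)
  ultimately show ?thesis by simp
qed

definition coupling_cost :: "real \<Rightarrow> nat \<Rightarrow> ((nat \<Rightarrow> real) \<times> (nat \<Rightarrow> real)) measure \<Rightarrow> ennreal" where
  "coupling_cost p N \<gamma> =
     (\<integral>\<^sup>+ z. ennreal (1 / real N * (\<Sum>i\<in>{1..N}. \<bar>fst z i - snd z i\<bar> powr p)) \<partial>\<gamma>)"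

lemma wp_eq_INF_coupling_cost:
  "wp p \<mu>1 \<mu>2 N = enn2real (INF \<gamma>\<in>couplings N \<mu>1 \<mu>2. coupling_cost p N \<gamma>) powr (1 / p)"
  by (simp add: wp_def coupling_cost_def)

lemma coupling_cost_integrand_measurable:
  assumes "\<gamma> \<in> couplings N \<mu>1 \<mu>2"
  shows "(\<lambda>z. ennreal (1 / real N * (\<Sum>i\<in>{1..N}. \<bar>fst z i - snd z i\<bar> powr p))) \<in> borel_measurable \<gamma>"
proof -
  have "(\<lambda>z. ennreal (1 / real N * (\<Sum>i\<in>{1..N}. \<bar>fst z i - snd z i\<bar> powr p)))
      \<in> borel_measurable (RN N \<Otimes>\<^sub>M RN N)"
    unfolding RN_def by measurable
  then show ?thesis by (subst measurable_cong_sets[OF sets_couplings[OF assms] refl])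
qed

lemma coupling_cost_pair_measure_finite:
  assumes p: "p \<ge> 1"
    and \<mu>1: "prob_space \<mu>1" "sets \<mu>1 = sets (RN N)"
    and \<mu>2: "prob_space \<mu>2" "sets \<mu>2 = sets (RN N)"
    and mom1: "(\<integral>\<^sup>+ x. ennreal (pnorm p N x powr p) \<partial>\<mu>1) < \<infinity>"
    and mom2: "(\<integral>\<^sup>+ x. ennreal (pnorm p N x powr p) \<partial>\<mu>2) < \<infinity>"
  shows "coupling_cost p N (\<mu>1 \<Otimes>\<^sub>M \<mu>2) < \<infinity>"
proof -
  define c where "c = 2 powr (p - 1) / real N"
  define Q where "Q x = ennreal (c * pnorm p N x powr p)" for x
  have c_nonneg: "c \<ge> 0" by (simp add: c_def)
  have Q_meas: "Q \<in> borel_measurable (RN N)"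
    unfolding Q_def pnorm_def RN_def by measurable
  have "coupling_cost p N (\<mu>1 \<Otimes>\<^sub>M \<mu>2) \<le> (\<integral>\<^sup>+ z. Q (fst z) + Q (snd z) \<partial>(\<mu>1 \<Otimes>\<^sub>M \<mu>2))"
    unfolding coupling_cost_def
  proof (rule nn_integral_mono)
    fix z :: "(nat \<Rightarrow> real) \<times> (nat \<Rightarrow> real)"
    have "1 / real N * (\<Sum>i\<in>{1..N}. \<bar>fst z i - snd z i\<bar> powr p)
        \<le> 1 / real N * (2 powr (p - 1) * ((\<Sum>i\<in>{1..N}. \<bar>fst z i\<bar> powr p) + (\<Sum>i\<in>{1..N}. \<bar>snd z i\<bar> powr p)))"
      by (intro mult_left_mono sum_abs_diff_powr_le[OF p]) simp
    also have "\<dots> = c * pnorm p N (fst z) powr p + c * pnorm p N (snd z) powr p"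
      using p by (simp add: c_def pnorm_powr algebra_simps)
    finally show "ennreal (1 / real N * (\<Sum>i\<in>{1..N}. \<bar>fst z i - snd z i\<bar> powr p)) \<le> Q (fst z) + Q (snd z)"
      unfolding Q_def using c_nonneg by (simp add: ennreal_leI flip: ennreal_plus)
  qed
  also have "\<dots> = (\<integral>\<^sup>+ x. Q x \<partial>\<mu>1) + (\<integral>\<^sup>+ x. Q x \<partial>\<mu>2)"
    using nn_integral_couplings_add[OF pair_measure_in_couplings[OF \<mu>1 \<mu>2] Q_meas Q_meas] .
  also have "\<dots> < \<infinity>"
  proof -
    have "(\<integral>\<^sup>+ x. Q x \<partial>\<mu>) = ennreal c * (\<integral>\<^sup>+ x. ennreal (pnorm p N x powr p) \<partial>\<mu>)"
      if "sets \<mu> = sets (RN N)" for \<mu>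
    proof -
      have "(\<lambda>x. ennreal (pnorm p N x powr p)) \<in> borel_measurable (RN N)"
        unfolding pnorm_def RN_def by measurable
      then have "(\<lambda>x. ennreal (pnorm p N x powr p)) \<in> borel_measurable \<mu>"
        by (simp add: measurable_cong_sets[OF that refl])
      then show ?thesis
        unfolding Q_def using c_nonneg by (simp add: ennreal_mult' nn_integral_cmult)
    qed
    then show ?thesis
      using \<mu>1(2) \<mu>2(2) mom1 mom2 by (simp add: ennreal_mult_less_top)
  qed
  finally show ?thesis .
qed

lemma integral_diff_powr_le_coupling_cost:
  assumes p: "p \<ge> 1" and N: "N > 0"
    and \<mu>1: "prob_space \<mu>1" "sets \<mu>1 = sets (RN N)" "perm_invariant N \<mu>1"
    and \<mu>2: "prob_space \<mu>2" "sets \<mu>2 = sets (RN N)" "perm_invariant N \<mu>2"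
    and I: "I \<subseteq> {1..N}"
    and f: "f \<in> borel_measurable (RN (card I))" "\<And>\<phi>. \<phi> \<in> space (RN (card I)) \<Longrightarrow> \<bar>f \<phi>\<bar> \<le> B"
    and lip: "\<forall>\<phi>\<in>space (RN (card I)). \<forall>\<psi>\<in>space (RN (card I)).
                \<bar>f \<phi> - f \<psi>\<bar> \<le> pnorm p (card I) (\<lambda>j. \<phi> j - \<psi> j)"
    and \<gamma>: "\<gamma> \<in> couplings N \<mu>1 \<mu>2"
  shows "ennreal (\<bar>integral\<^sup>L \<mu>1 (f \<circ> PI I) - integral\<^sup>L \<mu>2 (f \<circ> PI I)\<bar> powr p)
           \<le> ennreal (card I) * coupling_cost p N \<gamma>"
proof -
  interpret \<gamma>: prob_space \<gamma> using couplings_prob_space[OF \<gamma> \<mu>1(1)] .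
  define h where "h = cyclic_average N (f \<circ> PI I)"
  define G where "G z = h (fst z) - h (snd z)" for z
  have fPI: "f \<circ> PI I \<in> borel_measurable (RN N)" "\<And>x. \<bar>(f \<circ> PI I) x\<bar> \<le> B"
    using measurable_comp[OF PI_measurable[OF I] f(1)] f(2)[OF PI_in_space] by auto
  have h: "h \<in> borel_measurable (RN N)" "\<And>x. \<bar>h x\<bar> \<le> B"
    unfolding h_def by (rule cyclic_average_measurable[OF fPI(1)], rule abs_cyclic_average_le[OF fPI(2)])
  have "integral\<^sup>L \<mu> (f \<circ> PI I) = integral\<^sup>L \<mu> h"
    if "prob_space \<mu>" "sets \<mu> = sets (RN N)" "perm_invariant N \<mu>" for \<mu>
  proof -
    interpret prob_space \<mu> by (rule that(1))
    have "integrable \<mu> (f \<circ> PI I)"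
      using fPI measurable_cong_sets[OF that(2) refl]
      by (intro integrable_const_bound[where B = B] AE_I2) auto
    then show ?thesis unfolding h_def using integral_cyclic_average[OF that(3) _ N] by simp
  qed
  then have D: "integral\<^sup>L \<mu>1 (f \<circ> PI I) - integral\<^sup>L \<mu>2 (f \<circ> PI I) = \<gamma>.expectation G"
    using integral_diff_couplings[OF \<gamma> \<mu>1(1) h] \<mu>1 \<mu>2 by (simp add: G_def[abs_def])
  have G_meas: "G \<in> borel_measurable \<gamma>"
    unfolding G_def using measurable_comp[OF couplings_measurable_fst[OF \<gamma>] h(1)]
      measurable_comp[OF couplings_measurable_snd[OF \<gamma>] h(1)] by (simp add: comp_def)
  have G_bdd: "\<bar>G z\<bar> \<le> 2 * B" for z
    using h(2)[of "fst z"] h(2)[of "snd z"] by (simp add: G_def)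
  have "ennreal (\<bar>\<gamma>.expectation G\<bar> powr p) \<le> (\<integral>\<^sup>+ z. ennreal (\<bar>G z\<bar> powr p) \<partial>\<gamma>)"
    by (rule \<gamma>.abs_expectation_powr_le_nn_integral[OF p G_meas G_bdd])
  also have "\<dots> \<le> (\<integral>\<^sup>+ z. ennreal (card I) * ennreal (1 / real N * (\<Sum>i\<in>{1..N}. \<bar>fst z i - snd z i\<bar> powr p)) \<partial>\<gamma>)"
  proof (rule nn_integral_mono)
    fix z
    have "\<bar>G z\<bar> powr p \<le> card I * (1 / real N * (\<Sum>i\<in>{1..N}. \<bar>fst z i - snd z i\<bar> powr p))"
      using cyclic_average_PI_lipschitz[OF p I N lip, of "fst z" "snd z"] by (simp add: G_def h_def)
    then show "ennreal (\<bar>G z\<bar> powr p)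
        \<le> ennreal (card I) * ennreal (1 / real N * (\<Sum>i\<in>{1..N}. \<bar>fst z i - snd z i\<bar> powr p))"
      by (simp add: ennreal_leI flip: ennreal_mult')
  qed
  also have "\<dots> = ennreal (card I) * coupling_cost p N \<gamma>"
    unfolding coupling_cost_def by (rule nn_integral_cmult[OF coupling_cost_integrand_measurable[OF \<gamma>]])
  finally show ?thesis by (simp only: D)
qed

lemma lipschitz_PI_integral_diff_le:
  assumes p: "p \<ge> 1" and N: "N > 0"
    and \<mu>1: "prob_space \<mu>1" "sets \<mu>1 = sets (RN N)" "perm_invariant N \<mu>1"
    and \<mu>2: "prob_space \<mu>2" "sets \<mu>2 = sets (RN N)" "perm_invariant N \<mu>2"
    and mom1: "(\<integral>\<^sup>+ x. ennreal (pnorm p N x powr p) \<partial>\<mu>1) < \<infinity>"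
    and mom2: "(\<integral>\<^sup>+ x. ennreal (pnorm p N x powr p) \<partial>\<mu>2) < \<infinity>"
    and I: "I \<subseteq> {1..N}"
    and f: "f \<in> borel_measurable (RN (card I))" "\<And>\<phi>. \<phi> \<in> space (RN (card I)) \<Longrightarrow> \<bar>f \<phi>\<bar> \<le> B"
    and lip: "\<forall>\<phi>\<in>space (RN (card I)). \<forall>\<psi>\<in>space (RN (card I)).
                \<bar>f \<phi> - f \<psi>\<bar> \<le> pnorm p (card I) (\<lambda>j. \<phi> j - \<psi> j)"
  shows "\<bar>integral\<^sup>L \<mu>1 (f \<circ> PI I) - integral\<^sup>L \<mu>2 (f \<circ> PI I)\<bar> \<le> card I powr (1 / p) * wp p \<mu>1 \<mu>2 N"
proof -
  define D where "D = integral\<^sup>L \<mu>1 (f \<circ> PI I) - integral\<^sup>L \<mu>2 (f \<circ> PI I)"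
  define m where "m = (INF \<gamma>\<in>couplings N \<mu>1 \<mu>2. coupling_cost p N \<gamma>)"
  have cpl: "\<mu>1 \<Otimes>\<^sub>M \<mu>2 \<in> couplings N \<mu>1 \<mu>2"
    using pair_measure_in_couplings[OF \<mu>1(1,2) \<mu>2(1,2)] .
  have "ennreal (\<bar>D\<bar> powr p) \<le> ennreal (card I) * m"
    unfolding m_def D_def using cpl
    by (intro le_mult_INF_ennreal integral_diff_powr_le_coupling_cost[OF p N \<mu>1 \<mu>2 I f lip]) auto
  moreover have "m < \<infinity>"
    using INF_lower[OF cpl, of "coupling_cost p N"]
      coupling_cost_pair_measure_finite[OF p \<mu>1(1,2) \<mu>2(1,2) mom1 mom2] by (simp add: m_def)
  moreover have "ennreal (card I) * m = ennreal (card I * enn2real m)"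
    using \<open>m < \<infinity>\<close> by (simp add: ennreal_mult)
  ultimately have "\<bar>D\<bar> powr p \<le> card I * enn2real m"
    by simp
  then have "\<bar>D\<bar> \<le> (card I * enn2real m) powr (1 / p)"
    using p powr_mono2[of "1 / p" "\<bar>D\<bar> powr p"] by (simp add: powr_powr)
  also have "\<dots> = card I powr (1 / p) * wp p \<mu>1 \<mu>2 N"
    by (simp add: powr_mult wp_eq_INF_coupling_cost m_def)
  finally show ?thesis unfolding D_def .
qed

theorem lemma2p3:
  fixes p :: real and N :: nat and \<mu>1 \<mu>2 :: "(nat \<Rightarrow> real) measure"
    and I :: "nat set" and f :: "(nat \<Rightarrow> real) \<Rightarrow> real"
  assumes p: "p \<ge> 1"
    and prob1: "prob_space \<mu>1" and sets1: "sets \<mu>1 = sets (RN N)"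
    and prob2: "prob_space \<mu>2" and sets2: "sets \<mu>2 = sets (RN N)"
    and inv1: "perm_invariant N \<mu>1" and inv2: "perm_invariant N \<mu>2"
    and mom1: "(\<integral>\<^sup>+ x. ennreal (pnorm p N x powr p) \<partial>\<mu>1) < \<infinity>"
    and mom2: "(\<integral>\<^sup>+ x. ennreal (pnorm p N x powr p) \<partial>\<mu>2) < \<infinity>"
    and I: "I \<subseteq> {1..N}" and Iproper: "card I < N"
    and fmeas: "f \<in> borel_measurable (RN (card I))"
    and fbdd: "\<exists>B. \<forall>\<phi>\<in>space (RN (card I)). \<bar>f \<phi>\<bar> \<le> B"
    and flip: "\<forall>\<phi>\<in>space (RN (card I)). \<forall>\<psi>\<in>space (RN (card I)).
                 \<bar>f \<phi> - f \<psi>\<bar> \<le> pnorm p (card I) (\<lambda>j. \<phi> j - \<psi> j)"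
  shows "\<bar>integral\<^sup>L \<mu>1 (f \<circ> PI I) - integral\<^sup>L \<mu>2 (f \<circ> PI I)\<bar>
           \<le> (real (card I) / (1 - real (card I) / real N)) powr (1 / p) * wp p \<mu>1 \<mu>2 N"
proof -
  have N: "N > 0" using Iproper by simp
  obtain B where "\<forall>\<phi>\<in>space (RN (card I)). \<bar>f \<phi>\<bar> \<le> B" using fbdd by blast
  then have "\<bar>integral\<^sup>L \<mu>1 (f \<circ> PI I) - integral\<^sup>L \<mu>2 (f \<circ> PI I)\<bar> \<le> card I powr (1 / p) * wp p \<mu>1 \<mu>2 N"
    using lipschitz_PI_integral_diff_le[OF p N prob1 sets1 inv1 prob2 sets2 inv2 mom1 mom2 I fmeas _ flip]
    by blast
  also have "\<dots> \<le> (card I / (1 - card I / N)) powr (1 / p) * wp p \<mu>1 \<mu>2 N"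
  proof (intro mult_right_mono powr_mono2)
    have "0 < 1 - card I / N" "1 - card I / N \<le> 1" using Iproper by (auto simp: field_simps)
    then show "real (card I) \<le> card I / (1 - card I / N)"
      by (simp add: le_divide_eq mult_left_le)
  qed (use p in \<open>auto simp: wp_def\<close>)
  finally show ?thesis .
qed

end
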